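(* Let $n$, $r$, $a$ be positive integers with $n=2r+1$ and $a\ge 2$. Then $$\rho_2(K(n+2a,r+a))\ \ge\ 2^{\lfloor a/2\rfloor}\,\rho_2(K(n,r)).$$
   Context: For integers $n\ge 2r$, the Kneser graph $K(n,r)$ has as vertices the $r$-element subsets of $[n]=\{1,\dots,n\}$, two vertices being adjacent iff they are disjoint. A $2$-packing of a graph $G$ is a set of vertices pairwise at distance at least $3$ in $G$; $\rho_2(G)$ is the maximum cardinality of a $2$-packing. *)

theory Defs
  imports Main
begin

definition kneser_vertices :: "nat \<Rightarrow> nat \<Rightarrow> nat set set" where
  "kneser_vertices n r = {A. A \<subseteq> {1..n} \<and> card A = r}"

definition kneser_adj :: "nat set \<Rightarrow> nat set \<Rightarrow> bool" where
  "kneser_adj A B \<longleftrightarrow> A \<inter> B = {}"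

definition dist_ge3 :: "'a set \<Rightarrow> ('a \<Rightarrow> 'a \<Rightarrow> bool) \<Rightarrow> 'a \<Rightarrow> 'a \<Rightarrow> bool" where
  "dist_ge3 V E u v \<longleftrightarrow> u \<noteq> v \<and> \<not> E u v \<and> \<not> (\<exists>w\<in>V. E u w \<and> E w v)"

definition two_packing :: "'a set \<Rightarrow> ('a \<Rightarrow> 'a \<Rightarrow> bool) \<Rightarrow> 'a set \<Rightarrow> bool" where
  "two_packing V E P \<longleftrightarrow> P \<subseteq> V \<and> (\<forall>u\<in>P. \<forall>v\<in>P. u \<noteq> v \<longrightarrow> dist_ge3 V E u v)"

definition rho2 :: "'a set \<Rightarrow> ('a \<Rightarrow> 'a \<Rightarrow> bool) \<Rightarrow> nat" where
  "rho2 V E = Max (card ` {P. two_packing V E P})"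

definition rho2_kneser :: "nat \<Rightarrow> nat \<Rightarrow> nat" where
  "rho2_kneser n r = rho2 (kneser_vertices n r) kneser_adj"

end

theory Submission
  imports Defs
begin

text \<open>Two r-sets A, B of [2r+1] have a common neighbour in K(2r+1,r) iff r points of [2r+1]
  avoid A \<union> B, i.e. iff |A \<inter> B| \<ge> r - 1. Hence a 2-packing of K(2r+1,r) is exactly a family
  of r-sets whose pairwise intersections have between 1 and r - 2 elements. This condition
  survives padding: adjoining one fresh point to every member gives a 2-packing of
  K(2r+3,r+1) of the same size, and adjoining either of two disjoint fresh pairs gives one of
  K(2r+5,r+2) of twice the size. Using \<lfloor>a/2\<rfloor> doublings and possibly one single step yields
  the bound.\<close>

lemma finite_kneser_vertices: "finite (kneser_vertices n r)"
proof -
  have "kneser_vertices n r \<subseteq> Pow {1..n}" by (auto simp: kneser_vertices_def)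
  then show ?thesis by (simp add: finite_subset)
qed

lemma kneser_common_neighbour_iff:
  assumes "A \<in> kneser_vertices n r" and "B \<in> kneser_vertices n r"
  shows "(\<exists>W\<in>kneser_vertices n r. kneser_adj A W \<and> kneser_adj W B) \<longleftrightarrow> r + card (A \<union> B) \<le> n"
proof -
  have AB: "A \<union> B \<subseteq> {1..n}" using assms by (auto simp: kneser_vertices_def)
  then have free: "card ({1..n} - (A \<union> B)) = n - card (A \<union> B)" and "card (A \<union> B) \<le> n"
    using card_mono[OF _ AB] by (auto simp: card_Diff_subset finite_subset)
  have "(\<exists>W\<in>kneser_vertices n r. kneser_adj A W \<and> kneser_adj W B)
      \<longleftrightarrow> (\<exists>W. W \<subseteq> {1..n} - (A \<union> B) \<and> card W = r)"
    by (auto simp: kneser_vertices_def kneser_adj_def)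
  also have "\<dots> \<longleftrightarrow> r \<le> n - card (A \<union> B)"
    using free by (metis card_mono finite_Diff finite_atLeastAtMost obtain_subset_with_card_n)
  finally show ?thesis using \<open>card (A \<union> B) \<le> n\<close> by linarith
qed

definition odd_kneser_packing :: "nat \<Rightarrow> nat set set \<Rightarrow> bool" where
  "odd_kneser_packing r P \<longleftrightarrow> P \<subseteq> kneser_vertices (2 * r + 1) r \<and>
     (\<forall>A\<in>P. \<forall>B\<in>P. A \<noteq> B \<longrightarrow> A \<inter> B \<noteq> {} \<and> card (A \<inter> B) + 2 \<le> r)"

lemma dist_ge3_odd_kneser_iff:
  assumes A: "A \<in> kneser_vertices (2 * r + 1) r" and B: "B \<in> kneser_vertices (2 * r + 1) r"
  shows "dist_ge3 (kneser_vertices (2 * r + 1) r) kneser_adj A B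
    \<longleftrightarrow> A \<noteq> B \<and> A \<inter> B \<noteq> {} \<and> card (A \<inter> B) + 2 \<le> r"
proof -
  have "finite A" "finite B" "card A = r" "card B = r"
    using A B by (auto simp: kneser_vertices_def dest: rev_finite_subset[OF finite_atLeastAtMost])
  then have "card (A \<union> B) + card (A \<inter> B) = 2 * r" using card_Un_Int[of A B] by linarith
  then have "r + card (A \<union> B) \<le> 2 * r + 1 \<longleftrightarrow> \<not> card (A \<inter> B) + 2 \<le> r" by linarith
  then show ?thesis
    unfolding dist_ge3_def kneser_common_neighbour_iff[OF A B] by (simp add: kneser_adj_def)
qed

lemma two_packing_odd_kneser_iff:
  "two_packing (kneser_vertices (2 * r + 1) r) kneser_adj P \<longleftrightarrow> odd_kneser_packing r P"
  unfolding two_packing_def odd_kneser_packing_def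
  using dist_ge3_odd_kneser_iff by (metis subsetD)

lemma rho2_ge_card:
  assumes "finite V" and "two_packing V E P"
  shows "card P \<le> rho2 V E"
proof -
  have "{P. two_packing V E P} \<subseteq> Pow V" by (auto simp: two_packing_def)
  then show ?thesis
    unfolding rho2_def using assms by (intro Max_ge) (auto intro: finite_subset)
qed

lemma rho2_attained:
  assumes "finite V"
  obtains P where "two_packing V E P" and "card P = rho2 V E"
proof -
  have "{P. two_packing V E P} \<subseteq> Pow V" by (auto simp: two_packing_def)
  moreover have "two_packing V E {}" by (simp add: two_packing_def)
  ultimately have "rho2 V E \<in> card ` {P. two_packing V E P}"
    unfolding rho2_def using assms by (intro Max_in) (auto intro: finite_subset)
  then show ?thesis using that by (auto simp del: mem_Collect_eq)
qed

text \<open>Members A \<union> Z and B \<union> W meet in (A \<inter> B) \<union> (Z \<inter> W). For distinct pads A = B is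
  allowed, which is where r > 0 is needed.\<close>

lemma odd_kneser_packing_pad:
  assumes P: "odd_kneser_packing r P" and "r > 0"
    and pads: "\<And>Z. Z \<in> \<Z> \<Longrightarrow> Z \<subseteq> {2 * r + 2..2 * (r + s) + 1} \<and> card Z = s"
    and pads_apart: "\<And>Z W. Z \<in> \<Z> \<Longrightarrow> W \<in> \<Z> \<Longrightarrow> Z \<noteq> W \<Longrightarrow> card (Z \<inter> W) + 2 \<le> s"
  shows "odd_kneser_packing (r + s) ((\<lambda>(A, Z). A \<union> Z) ` (P \<times> \<Z>))"
    and "card ((\<lambda>(A, Z). A \<union> Z) ` (P \<times> \<Z>)) = card P * card \<Z>"
proof -
  define S where "S = {1..2 * r + 1}"
  have mem: "A \<subseteq> S" "card A = r" "finite A" if "A \<in> P" for A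
    using that P by (auto simp: odd_kneser_packing_def kneser_vertices_def S_def
        dest: rev_finite_subset[OF finite_atLeastAtMost])
  have pad_out: "Z \<inter> S = {}" "finite Z" if "Z \<in> \<Z>" for Z
    using pads[OF that] by (auto simp: S_def intro: finite_subset)
  have meet: "(A \<union> Z) \<inter> (B \<union> W) = (A \<inter> B) \<union> (Z \<inter> W)"
    if "A \<in> P" "B \<in> P" "Z \<in> \<Z>" "W \<in> \<Z>" for A B Z W
    using that mem pad_out by blast
  have card_meet: "card ((A \<union> Z) \<inter> (B \<union> W)) = card (A \<inter> B) + card (Z \<inter> W)"
    if "A \<in> P" "B \<in> P" "Z \<in> \<Z>" "W \<in> \<Z>" for A B Z W
    unfolding meet[OF that] using that mem pad_out by (subst card_Un_disjoint) blast+
  have inj: "inj_on (\<lambda>(A, Z). A \<union> Z) (P \<times> \<Z>)"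
  proof (rule inj_onI, clarify)
    fix A Z B W assume "A \<in> P" "Z \<in> \<Z>" "B \<in> P" "W \<in> \<Z>" and eq: "A \<union> Z = B \<union> W"
    then have "A = (A \<union> Z) \<inter> S" "B = (B \<union> W) \<inter> S" "Z = (A \<union> Z) - S" "W = (B \<union> W) - S"
      using mem pad_out by blast+
    then show "A = B \<and> Z = W" using eq by simp
  qed
  then show "card ((\<lambda>(A, Z). A \<union> Z) ` (P \<times> \<Z>)) = card P * card \<Z>"
    by (simp add: card_image card_cartesian_product)
  have vertex: "A \<union> Z \<in> kneser_vertices (2 * (r + s) + 1) (r + s)" if "A \<in> P" "Z \<in> \<Z>" for A Z
    using card_meet[OF that(1,1) that(2,2)] mem[OF that(1)] pads[OF that(2)]
    by (auto simp: kneser_vertices_def S_def)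
  have apart: "(A \<union> Z) \<inter> (B \<union> W) \<noteq> {} \<and> card ((A \<union> Z) \<inter> (B \<union> W)) + 2 \<le> r + s"
    if "A \<in> P" "B \<in> P" "Z \<in> \<Z>" "W \<in> \<Z>" "A \<union> Z \<noteq> B \<union> W" for A B Z W
  proof (cases "Z = W")
    case True
    with that have "A \<inter> B \<noteq> {} \<and> card (A \<inter> B) + 2 \<le> r"
      using P by (auto simp: odd_kneser_packing_def)
    then show ?thesis using meet[OF that(1-4)] card_meet[OF that(1-4)] pads[OF that(3)] True
      by auto
  next
    case False
    have "A \<noteq> {}" using mem[OF that(1)] \<open>r > 0\<close> by auto
    then have "A \<inter> B \<noteq> {}"
      using that P by (cases "A = B") (auto simp: odd_kneser_packing_def)
    moreover have "card (A \<inter> B) \<le> r"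
      using card_mono[OF mem(3) Int_lower1] mem(2) that(1) by simp
    ultimately show ?thesis
      using meet[OF that(1-4)] card_meet[OF that(1-4)] pads_apart[OF that(3,4) False] by auto
  qed
  show "odd_kneser_packing (r + s) ((\<lambda>(A, Z). A \<union> Z) ` (P \<times> \<Z>))"
    unfolding odd_kneser_packing_def using vertex apart by fast
qed

lemma odd_kneser_packing_succ:
  assumes "odd_kneser_packing r P" and "r > 0"
  obtains P' where "odd_kneser_packing (r + 1) P'" and "card P' = card P"
  using odd_kneser_packing_pad[OF assms, of "{{2 * r + 2}}" 1] by auto

lemma odd_kneser_packing_double:
  assumes "odd_kneser_packing r P" and "r > 0"
  obtains P' where "odd_kneser_packing (r + 2) P'" and "card P' = 2 * card P"
proof -
  let ?\<Z> = "{{2 * r + 2, 2 * r + 3}, {2 * r + 4, 2 * r + 5}} :: nat set set"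
  have pads: "Z \<subseteq> {2 * r + 2..2 * (r + 2) + 1} \<and> card Z = 2" if "Z \<in> ?\<Z>" for Z
    using that by auto
  have pads_apart: "card (Z \<inter> W) + 2 \<le> 2" if "Z \<in> ?\<Z>" "W \<in> ?\<Z>" "Z \<noteq> W" for Z W
    using that by auto
  have "card ?\<Z> = 2" by (simp add: doubleton_eq_iff)
  then show ?thesis
    using odd_kneser_packing_pad[OF assms, of ?\<Z> 2, OF pads pads_apart] that
    by (simp add: mult.commute)
qed

lemma odd_kneser_packing_grow:
  assumes "odd_kneser_packing r P" and "r > 0"
  obtains P' where "odd_kneser_packing (r + a) P'" and "card P' = 2 ^ (a div 2) * card P"
proof -
  have "\<exists>P'. odd_kneser_packing (r + 2 * k) P' \<and> card P' = 2 ^ k * card P" for k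
  proof (induction k)
    case 0
    show ?case using assms(1) by auto
  next
    case (Suc k)
    then obtain Q where Q: "odd_kneser_packing (r + 2 * k) Q" "card Q = 2 ^ k * card P" by blast
    obtain Q' where "odd_kneser_packing (r + 2 * k + 2) Q'" "card Q' = 2 * card Q"
      using odd_kneser_packing_double[OF Q(1)] \<open>r > 0\<close> by auto
    then show ?case using Q(2) by (intro exI[of _ Q']) simp
  qed
  then obtain Q where Q: "odd_kneser_packing (r + 2 * (a div 2)) Q" "card Q = 2 ^ (a div 2) * card P"
    by blast
  show ?thesis
  proof (cases "even a")
    case True
    then have "r + a = r + 2 * (a div 2)" by simp
    with Q show ?thesis by (metis that)
  next
    case False
    then have "r + a = r + 2 * (a div 2) + 1" by (simp add: odd_two_times_div_two_succ)
    moreover obtain P' where "odd_kneser_packing (r + 2 * (a div 2) + 1) P'" "card P' = card Q"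
      using odd_kneser_packing_succ[OF Q(1)] \<open>r > 0\<close> by auto
    ultimately show ?thesis using Q(2) by (metis that)
  qed
qed

theorem corollary4p4:
  fixes n r a :: nat
  assumes "r > 0" and "a \<ge> 2" and "n = 2 * r + 1"
  shows "rho2_kneser (n + 2 * a) (r + a) \<ge> 2 ^ (a div 2) * rho2_kneser n r"
proof -
  obtain P where "two_packing (kneser_vertices n r) kneser_adj P" and P: "card P = rho2_kneser n r"
    unfolding rho2_kneser_def by (rule rho2_attained[OF finite_kneser_vertices])
  then have "odd_kneser_packing r P" using assms(3) two_packing_odd_kneser_iff by simp
  obtain P' where P': "odd_kneser_packing (r + a) P'" "card P' = 2 ^ (a div 2) * card P"
    using odd_kneser_packing_grow[OF \<open>odd_kneser_packing r P\<close> \<open>r > 0\<close>] .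
  have "card P' \<le> rho2_kneser (2 * (r + a) + 1) (r + a)"
    using P'(1) unfolding rho2_kneser_def two_packing_odd_kneser_iff[symmetric]
    by (rule rho2_ge_card[OF finite_kneser_vertices])
  moreover have "n + 2 * a = 2 * (r + a) + 1" using assms(3) by simp
  ultimately show ?thesis using P P'(2) by simp
qed

end
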